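(* If $T$ is a subcubic tree, then $\gamma_e(T)=\gamma_{e,f}^*(T)$ if and only if $T$ is $K_{1,3}$.
   Context: All graphs are finite, simple and undirected; subcubic means maximum degree at most $3$; $K_{1,3}$ is the star with three leaves. For a graph $G$ and $D\subseteq V(G)$, and vertices $u,v$, let $\mathrm{dist}_{(G,D)}(u,v)$ be the minimum number of edges of a path $P$ in $G$ between $u$ and $v$ such that $D$ contains exactly one endvertex of $P$ and no internal vertex of $P$ ($\infty$ if no such path exists; in particular $\mathrm{dist}_{(G,D)}(u,u)=0$ for $u\in D$). Let $w_{(G,D)}(u)=\sum_{v\in D}\left(\frac12\right)^{\mathrm{dist}_{(G,D)}(u,v)-1}$ with $\left(\frac12\right)^\infty=0$. $D$ is an exponential dominating set if $w_{(G,D)}(u)\ge 1$ for every $u\in V(G)$, and $\gamma_e(G)$ is the minimum size of an exponential dominating set. The fractional porous exponential domination number $\gamma_{e,f}^*(G)$ is the optimum value of the linear program: minimize $\sum_{u\in V(G)}x(u)$ subject to $\sum_{u\in V(G)}\left(\frac12\right)^{\mathrm{dist}_G(u,v)-1}x(u)\ge 1$ for every $v\in V(G)$ and $x\ge 0$, where $\mathrm{dist}_G$ is the usual distance. *)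

theory Defs
  imports Complex_Main "HOL-Library.Extended_Nat"
begin

definition graph :: "'a set \<Rightarrow> ('a \<Rightarrow> 'a \<Rightarrow> bool) \<Rightarrow> bool" where
  "graph V E \<longleftrightarrow> finite V \<and> (\<forall>u v. E u v \<longrightarrow> u \<in> V \<and> v \<in> V)
     \<and> (\<forall>u v. E u v \<longrightarrow> E v u) \<and> (\<forall>u. \<not> E u u)"

definition is_path :: "'a set \<Rightarrow> ('a \<Rightarrow> 'a \<Rightarrow> bool) \<Rightarrow> 'a list \<Rightarrow> bool" where
  "is_path V E p \<longleftrightarrow> p \<noteq> [] \<and> distinct p \<and> set p \<subseteq> V
     \<and> (\<forall>i. Suc i < length p \<longrightarrow> E (p ! i) (p ! Suc i))"

definition connected_graph :: "'a set \<Rightarrow> ('a \<Rightarrow> 'a \<Rightarrow> bool) \<Rightarrow> bool" where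
  "connected_graph V E \<longleftrightarrow> V \<noteq> {} \<and>
     (\<forall>u\<in>V. \<forall>v\<in>V. \<exists>p. is_path V E p \<and> hd p = u \<and> last p = v)"

definition is_cycle :: "'a set \<Rightarrow> ('a \<Rightarrow> 'a \<Rightarrow> bool) \<Rightarrow> 'a list \<Rightarrow> bool" where
  "is_cycle V E c \<longleftrightarrow> is_path V E c \<and> length c \<ge> 3 \<and> E (last c) (hd c)"

definition tree :: "'a set \<Rightarrow> ('a \<Rightarrow> 'a \<Rightarrow> bool) \<Rightarrow> bool" where
  "tree V E \<longleftrightarrow> graph V E \<and> connected_graph V E \<and> (\<nexists>c. is_cycle V E c)"

definition subcubic :: "'a set \<Rightarrow> ('a \<Rightarrow> 'a \<Rightarrow> bool) \<Rightarrow> bool" where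
  "subcubic V E \<longleftrightarrow> (\<forall>u\<in>V. card {v\<in>V. E u v} \<le> 3)"

definition K13_V :: "nat set" where "K13_V = {0,1,2,3}"
definition K13_E :: "nat \<Rightarrow> nat \<Rightarrow> bool" where
  "K13_E a b \<longleftrightarrow> (a = 0 \<and> b \<in> {1,2,3}) \<or> (b = 0 \<and> a \<in> {1,2,3})"

definition graph_iso :: "'a set \<Rightarrow> ('a \<Rightarrow> 'a \<Rightarrow> bool) \<Rightarrow> 'b set \<Rightarrow> ('b \<Rightarrow> 'b \<Rightarrow> bool) \<Rightarrow> bool" where
  "graph_iso V E W F \<longleftrightarrow> (\<exists>f. bij_betw f V W \<and> (\<forall>u\<in>V. \<forall>v\<in>V. E u v \<longleftrightarrow> F (f u) (f v)))"

text \<open>Usual distance (number of edges of a shortest path), \<infinity> if none.\<close>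
definition gdist :: "'a set \<Rightarrow> ('a \<Rightarrow> 'a \<Rightarrow> bool) \<Rightarrow> 'a \<Rightarrow> 'a \<Rightarrow> enat" where
  "gdist V E u v = Inf {enat (length p - 1) | p. is_path V E p \<and> hd p = u \<and> last p = v}"

definition Ddist :: "'a set \<Rightarrow> ('a \<Rightarrow> 'a \<Rightarrow> bool) \<Rightarrow> 'a set \<Rightarrow> 'a \<Rightarrow> 'a \<Rightarrow> enat" where
  "Ddist V E D u v = Inf {enat (length p - 1) | p. is_path V E p \<and> hd p = u \<and> last p = v
      \<and> card ({hd p, last p} \<inter> D) = 1 \<and> set (butlast (tl p)) \<inter> D = {}}"

definition half_pow :: "enat \<Rightarrow> real" where
  "half_pow d = (case d of enat n \<Rightarrow> (1/2::real) powr (real n - 1) | \<infinity> \<Rightarrow> 0)"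

definition exp_weight :: "'a set \<Rightarrow> ('a \<Rightarrow> 'a \<Rightarrow> bool) \<Rightarrow> 'a set \<Rightarrow> 'a \<Rightarrow> real" where
  "exp_weight V E D u = (\<Sum>v\<in>D. half_pow (Ddist V E D u v))"

definition exp_dominating :: "'a set \<Rightarrow> ('a \<Rightarrow> 'a \<Rightarrow> bool) \<Rightarrow> 'a set \<Rightarrow> bool" where
  "exp_dominating V E D \<longleftrightarrow> D \<subseteq> V \<and> (\<forall>u\<in>V. exp_weight V E D u \<ge> 1)"

definition gamma_e :: "'a set \<Rightarrow> ('a \<Rightarrow> 'a \<Rightarrow> bool) \<Rightarrow> nat" where
  "gamma_e V E = (LEAST k. \<exists>D. exp_dominating V E D \<and> card D = k)"

definition lp_feasible :: "'a set \<Rightarrow> ('a \<Rightarrow> 'a \<Rightarrow> bool) \<Rightarrow> ('a \<Rightarrow> real) \<Rightarrow> bool" where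
  "lp_feasible V E x \<longleftrightarrow> (\<forall>u\<in>V. x u \<ge> 0) \<and>
     (\<forall>v\<in>V. (\<Sum>u\<in>V. half_pow (gdist V E u v) * x u) \<ge> 1)"

definition gamma_ef_star :: "'a set \<Rightarrow> ('a \<Rightarrow> 'a \<Rightarrow> bool) \<Rightarrow> real" where
  "gamma_ef_star V E = Inf {\<Sum>u\<in>V. x u | x. lp_feasible V E x}"

end

theory Submission
  imports Defs
begin

text \<open>The LP is a relaxation: a path meeting \<open>D\<close> only in one endpoint is still a path, so the
  indicator of an exponential dominating set is feasible and the LP optimum is at most \<open>\<gamma>\<^sub>e\<close>.

  If a minimum exponential dominating set \<open>D\<close> contains \<open>u \<noteq> u'\<close>, let \<open>z\<close> be the neighbour
  of \<open>u\<close> towards \<open>u'\<close> and move weight \<open>\<epsilon>\<close> off \<open>u\<close>, putting \<open>\<epsilon>/2\<close> on \<open>z\<close>. The constraint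
  at \<open>v\<close> is unchanged when \<open>dist(u,v) = dist(z,v) + 1\<close>. Every other \<open>v\<close> is separated from
  \<open>u'\<close> by \<open>u\<close> in the tree, so \<open>u'\<close> contributes nothing to the exponential weight of \<open>v\<close> but at
  least \<open>2\<^sup>1\<^sup>-\<^sup>|\<^sup>V\<^sup>|\<close> to the LP constraint at \<open>v\<close>; this slack pays for \<open>\<epsilon> = 2\<^sup>-\<^sup>|\<^sup>V\<^sup>|\<close>.
  Hence the LP optimum is strictly smaller than \<open>\<gamma>\<^sub>e\<close>.

  If \<open>\<gamma>\<^sub>e = 1\<close>, the dominating vertex is adjacent to all others, so the subcubic tree is a
  star with at most three leaves. With fewer leaves the uniform solution has value below \<open>1\<close>,
  while for \<open>K\<^sub>1\<^sub>,\<^sub>3\<close> the dual solution \<open>1/3\<close> on every leaf shows that the LP optimum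
  is \<open>1\<close>.\<close>

section \<open>Walks and paths\<close>

lemma is_path_iff_successively:
  "is_path V E p \<longleftrightarrow> p \<noteq> [] \<and> distinct p \<and> set p \<subseteq> V \<and> successively E p"
  by (auto simp: is_path_def successively_conv_nth)

lemma graph_sym: "graph V E \<Longrightarrow> E a b \<Longrightarrow> E b a"
  by (simp add: graph_def)

lemma graph_irrefl: "graph V E \<Longrightarrow> \<not> E a a"
  by (simp add: graph_def)

lemma graph_vertices: "graph V E \<Longrightarrow> E a b \<Longrightarrow> a \<in> V \<and> b \<in> V"
  by (simp add: graph_def)

definition walk :: "'a set \<Rightarrow> ('a \<Rightarrow> 'a \<Rightarrow> bool) \<Rightarrow> 'a list \<Rightarrow> bool" where
  "walk V E p \<longleftrightarrow> p \<noteq> [] \<and> set p \<subseteq> V \<and> successively E p"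

lemma is_path_imp_walk: "is_path V E p \<Longrightarrow> walk V E p"
  by (simp add: is_path_iff_successively walk_def)

lemma walk_rev: "graph V E \<Longrightarrow> walk V E p \<Longrightarrow> walk V E (rev p)"
  by (auto simp: walk_def graph_def intro: successively_mono)

lemma walk_append_tl:
  "walk V E p \<Longrightarrow> walk V E q \<Longrightarrow> last p = hd q \<Longrightarrow> walk V E (p @ tl q)"
  unfolding walk_def by (cases q) (auto simp: successively_append_iff successively_Cons)

lemma last_append_tl: "q \<noteq> [] \<Longrightarrow> last p = hd q \<Longrightarrow> last (p @ tl q) = last q"
  by (cases q) auto

lemma walk_contains_path:
  assumes "walk V E p"
  shows "\<exists>q. is_path V E q \<and> hd q = hd p \<and> last q = last p \<and> set q \<subseteq> set p \<and> length q \<le> length p"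
  using assms
proof (induction "length p" arbitrary: p rule: less_induct)
  case less
  show ?case
  proof (cases "distinct p")
    case True
    then show ?thesis using less.prems by (auto simp: walk_def is_path_iff_successively)
  next
    case False
    then obtain xs ys zs y where p: "p = xs @ [y] @ ys @ [y] @ zs"
      using not_distinct_decomp by blast
    let ?p = "xs @ [y] @ zs"
    have "walk V E ?p"
      using less.prems unfolding walk_def p by (auto simp: successively_append_iff successively_Cons)
    moreover have "length ?p < length p" by (simp add: p)
    ultimately obtain q where "is_path V E q" "hd q = hd ?p" "last q = last ?p"
        "set q \<subseteq> set ?p" "length q \<le> length ?p"
      using less.hyps by blast
    then show ?thesis by (intro exI[of _ q]) (auto simp: p hd_append last_append)
  qed
qed

section \<open>Graph distance\<close>

lemma gdist_le_path:
  "is_path V E p \<Longrightarrow> hd p = a \<Longrightarrow> last p = b \<Longrightarrow> gdist V E a b \<le> enat (length p - 1)"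
  unfolding gdist_def by (rule Inf_lower) blast

lemma gdist_le_walk:
  assumes "walk V E p" "hd p = a" "last p = b"
  shows "gdist V E a b \<le> enat (length p - 1)"
proof -
  obtain q where q: "is_path V E q" "hd q = a" "last q = b" "length q \<le> length p"
    using walk_contains_path[OF assms(1)] assms by metis
  then have "gdist V E a b \<le> enat (length q - 1)" by (intro gdist_le_path)
  also have "\<dots> \<le> enat (length p - 1)" using q by simp
  finally show ?thesis .
qed

lemma gdist_attained:
  assumes "gdist V E a b = enat k"
  obtains p where "is_path V E p" "hd p = a" "last p = b" "length p = Suc k"
proof -
  let ?S = "{enat (length p - 1) | p. is_path V E p \<and> hd p = a \<and> last p = b}"
  have "?S \<noteq> {}"
    using assms unfolding gdist_def by (metis Inf_empty enat.distinct(2) top_enat_def)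
  then have "Inf ?S \<in> ?S" unfolding Inf_enat_def by (auto intro: LeastI)
  then obtain p where "is_path V E p" "hd p = a" "last p = b" "length p - 1 = k"
    using assms unfolding gdist_def by auto
  moreover have "p \<noteq> []" using \<open>is_path V E p\<close> by (simp add: is_path_def)
  ultimately show ?thesis by (intro that) auto
qed

lemma gdist_sym:
  assumes "graph V E"
  shows "gdist V E a b = gdist V E b a"
proof -
  have "gdist V E b a \<le> gdist V E a b" for a b
    unfolding gdist_def
  proof (rule Inf_greatest)
    fix x assume "x \<in> {enat (length p - 1) | p. is_path V E p \<and> hd p = a \<and> last p = b}"
    then obtain p where p: "is_path V E p" "hd p = a" "last p = b" "x = enat (length p - 1)"
      by blast
    then have "is_path V E (rev p)" "hd (rev p) = b" "last (rev p) = a"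
      using assms by (auto simp: is_path_iff_successively hd_rev last_rev graph_def
          intro: successively_mono)
    then show "Inf {enat (length p - 1) |p. is_path V E p \<and> hd p = b \<and> last p = a} \<le> x"
      using p(4) by (intro Inf_lower CollectI exI[of _ "rev p"]) simp
  qed
  then show ?thesis by (simp add: order.eq_iff)
qed

lemma gdist_self: "a \<in> V \<Longrightarrow> gdist V E a a = 0"
  using gdist_le_walk[of V E "[a]" a a] by (simp add: walk_def flip: zero_enat_def)

lemma gdist_edge: "graph V E \<Longrightarrow> E a b \<Longrightarrow> gdist V E a b \<le> 1"
  using gdist_le_walk[of V E "[a,b]" a b] by (auto simp: walk_def graph_def one_enat_def)

lemma gdist_le_one_imp:
  assumes "gdist V E a b \<le> 1"
  shows "a = b \<or> E a b"
proof -
  obtain k where k: "gdist V E a b = enat k" "k \<le> 1"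
    using assms enat_ile by (fastforce simp: one_enat_def)
  obtain p where "is_path V E p" "hd p = a" "last p = b" "length p = Suc k"
    using k(1) by (rule gdist_attained)
  with k(2) show ?thesis
    by (cases p; cases "tl p") (auto simp: is_path_iff_successively)
qed

lemma enat_le_one_if_not_two_le: "\<not> 2 \<le> (x::enat) \<Longrightarrow> x \<le> 1"
  by (metis Suc_1 Suc_ile_eq not_le numeral_eq_enat one_enat_def)

lemma gdist_ge_two:
  assumes "a \<noteq> b" "\<not> E a b"
  shows "2 \<le> gdist V E a b"
proof (rule ccontr)
  assume "\<not> 2 \<le> gdist V E a b"
  then have "a = b \<or> E a b" by (intro gdist_le_one_imp enat_le_one_if_not_two_le)
  with assms show False by blast
qed

lemma gdist_ge_one:
  assumes "a \<noteq> b"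
  shows "1 \<le> gdist V E a b"
proof -
  have "gdist V E a b \<noteq> 0"
  proof
    assume "gdist V E a b = 0"
    then have "gdist V E a b = enat 0" by (simp add: zero_enat_def)
    then obtain p where "is_path V E p" "hd p = a" "last p = b" "length p = Suc 0"
      by (rule gdist_attained)
    then show False using assms by (cases p) auto
  qed
  then show ?thesis using ileI1[of 0] by (simp add: one_eSuc)
qed

lemma gdist_le_neighbour_plus_one:
  assumes "graph V E" "E z u"
  shows "gdist V E z v \<le> gdist V E u v + 1"
proof (cases "gdist V E u v")
  case (enat k)
  then obtain p where p: "is_path V E p" "hd p = u" "last p = v" "length p = Suc k"
    by (rule gdist_attained)
  then have "walk V E (z # p)"
    using assms by (cases p) (auto simp: is_path_iff_successively walk_def graph_def)
  then have "gdist V E z v \<le> enat (length (z # p) - 1)"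
    using p by (intro gdist_le_walk) (auto simp: is_path_def)
  then show ?thesis using p enat by (simp add: plus_1_eSuc eSuc_enat)
qed simp

lemma gdist_finite:
  assumes "connected_graph V E" "a \<in> V" "b \<in> V"
  shows "gdist V E a b \<noteq> \<infinity>"
proof -
  obtain p where "is_path V E p" "hd p = a" "last p = b"
    using assms unfolding connected_graph_def by blast
  then have "gdist V E a b \<le> enat (length p - 1)" by (rule gdist_le_path)
  then show ?thesis by (cases "gdist V E a b") auto
qed

lemma gdist_le_card:
  assumes "finite V" "gdist V E a b \<noteq> \<infinity>"
  shows "gdist V E a b \<le> enat (card V)"
proof -
  obtain k where k: "gdist V E a b = enat k" using assms by auto
  then obtain p where p: "is_path V E p" "length p = Suc k" by (rule gdist_attained)
  then have "length p = card (set p)" by (simp add: is_path_def distinct_card)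
  also have "\<dots> \<le> card V" using p assms by (intro card_mono) (auto simp: is_path_def)
  finally show ?thesis using k p by simp
qed

lemma half_pow_enat: "half_pow (enat k) = 2 / 2 ^ k"
  by (simp add: half_pow_def powr_diff powr_realpow power_divide)

lemma half_pow_zero [simp]: "half_pow 0 = 2"
  using half_pow_enat[of 0] by (simp add: zero_enat_def)

lemma half_pow_one [simp]: "half_pow 1 = 1"
  using half_pow_enat[of 1] by (simp add: one_enat_def)

lemma half_pow_two [simp]: "half_pow 2 = 1 / 2"
  using half_pow_enat[of 2] by (simp add: numeral_eq_enat)

lemma half_pow_infinity [simp]: "half_pow \<infinity> = 0"
  by (simp add: half_pow_def)

lemma half_pow_nonneg: "0 \<le> half_pow d"
  by (cases d) (auto simp: half_pow_enat)

lemma half_pow_antimono: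
  assumes "a \<le> b"
  shows "half_pow b \<le> half_pow a"
proof (cases b)
  case (enat m)
  then obtain k where "a = enat k" "k \<le> m" using assms by (cases a) auto
  moreover have "(2::real) ^ k \<le> 2 ^ m" using \<open>k \<le> m\<close> by (intro power_increasing) auto
  ultimately show ?thesis using enat by (simp add: half_pow_enat frac_le)
qed (simp add: half_pow_nonneg)

lemma half_pow_plus_one: "half_pow (d + 1) = half_pow d / 2"
  by (cases d) (simp_all add: half_pow_enat plus_1_eSuc eSuc_enat)

lemma half_pow_le_two: "half_pow d \<le> 2"
  using half_pow_antimono[of 0 d] by simp

lemma half_pow_ge_one_imp:
  assumes "1 \<le> half_pow d"
  shows "d \<le> 1"
proof (rule ccontr)
  assume "\<not> d \<le> 1"
  then have "2 \<le> d" using enat_le_one_if_not_two_le by blast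
  then have "half_pow d \<le> half_pow 2" by (rule half_pow_antimono)
  with assms show False by simp
qed

lemma half_pow_gdist_self: "v \<in> V \<Longrightarrow> half_pow (gdist V E v v) = 2"
  by (simp add: gdist_self)

lemma half_pow_gdist_edge: "graph V E \<Longrightarrow> E w v \<Longrightarrow> 1 \<le> half_pow (gdist V E w v)"
  using half_pow_antimono[OF gdist_edge] by simp

lemma half_pow_gdist_le_one: "w \<noteq> v \<Longrightarrow> half_pow (gdist V E w v) \<le> 1"
  using half_pow_antimono[OF gdist_ge_one] by simp

lemma half_pow_gdist_le_half:
  "w \<noteq> v \<Longrightarrow> \<not> E w v \<Longrightarrow> half_pow (gdist V E w v) \<le> 1 / 2"
  using half_pow_antimono[OF gdist_ge_two] by simp

section \<open>Exponential domination and the LP\<close>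

lemma gdist_le_Ddist: "gdist V E a b \<le> Ddist V E D a b"
  unfolding gdist_def Ddist_def by (rule Inf_superset_mono) blast

lemma Ddist_le_path:
  "is_path V E p \<Longrightarrow> hd p = a \<Longrightarrow> last p = b \<Longrightarrow> card ({hd p, last p} \<inter> D) = 1
    \<Longrightarrow> set (butlast (tl p)) \<inter> D = {} \<Longrightarrow> Ddist V E D a b \<le> enat (length p - 1)"
  unfolding Ddist_def by (rule Inf_lower) blast

lemma Ddist_finite_imp_path:
  assumes "Ddist V E D a b \<noteq> \<infinity>"
  obtains p where "is_path V E p" "hd p = a" "last p = b" "set (butlast (tl p)) \<inter> D = {}"
proof -
  have "{enat (length p - 1) | p. is_path V E p \<and> hd p = a \<and> last p = b
      \<and> card ({hd p, last p} \<inter> D) = 1 \<and> set (butlast (tl p)) \<inter> D = {}} \<noteq> {}"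
    using assms unfolding Ddist_def by (metis Inf_empty top_enat_def)
  then show ?thesis using that by blast
qed

lemma half_pow_Ddist_le:
  assumes "graph V E"
  shows "half_pow (Ddist V E D v w) \<le> half_pow (gdist V E w v)"
proof -
  have "gdist V E w v = gdist V E v w" using assms by (rule gdist_sym)
  also have "\<dots> \<le> Ddist V E D v w" by (rule gdist_le_Ddist)
  finally show ?thesis by (rule half_pow_antimono)
qed

lemma exp_weight_le_sum_half_pow_gdist:
  assumes "graph V E"
  shows "exp_weight V E D v \<le> (\<Sum>w\<in>D. half_pow (gdist V E w v))"
  unfolding exp_weight_def using half_pow_Ddist_le[OF assms] by (rule sum_mono)

lemma exp_weight_member_ge_two:
  assumes "finite D" "D \<subseteq> V" "v \<in> D"
  shows "2 \<le> exp_weight V E D v"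
proof -
  have "Ddist V E D v v \<le> enat 0"
    using Ddist_le_path[of V E "[v]" v v D] assms by (auto simp: is_path_def)
  then have "half_pow (enat 0) \<le> half_pow (Ddist V E D v v)" by (rule half_pow_antimono)
  also have "\<dots> \<le> exp_weight V E D v" unfolding exp_weight_def
    using assms by (intro member_le_sum) (auto simp: half_pow_nonneg)
  finally show ?thesis by (simp add: half_pow_enat)
qed

lemma gamma_e_attained:
  assumes "finite V"
  obtains D where "exp_dominating V E D" "card D = gamma_e V E"
proof -
  have "exp_dominating V E V"
    unfolding exp_dominating_def
  proof (intro conjI ballI)
    fix v assume "v \<in> V"
    then have "2 \<le> exp_weight V E V v" by (rule exp_weight_member_ge_two[OF assms order_refl])
    then show "1 \<le> exp_weight V E V v" by simp
  qed simp
  then have "\<exists>k D. exp_dominating V E D \<and> card D = k" by blast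
  then have "\<exists>D. exp_dominating V E D \<and> card D = gamma_e V E"
    unfolding gamma_e_def by (rule LeastI_ex)
  then show ?thesis using that by blast
qed

lemma exp_dominating_singleton_iff:
  assumes "graph V E" "u \<in> V"
  shows "exp_dominating V E {u} \<longleftrightarrow> (\<forall>v\<in>V. v = u \<or> E v u)"
proof safe
  fix v assume dom: "exp_dominating V E {u}" and v: "v \<in> V" "\<not> E v u"
  then have "1 \<le> half_pow (Ddist V E {u} v u)"
    by (simp add: exp_dominating_def exp_weight_def)
  then have "Ddist V E {u} v u \<le> 1" by (rule half_pow_ge_one_imp)
  then have "gdist V E v u \<le> 1" by (rule order_trans[OF gdist_le_Ddist])
  then have "v = u \<or> E v u" by (rule gdist_le_one_imp)
  with v show "v = u" by blast
next
  assume star: "\<forall>v\<in>V. v = u \<or> E v u"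
  have "1 \<le> exp_weight V E {u} v" if v: "v \<in> V" for v
  proof (cases "v = u")
    case True
    then show ?thesis using exp_weight_member_ge_two[of "{u}" V u E] assms by simp
  next
    case False
    then have "E v u" using star v by blast
    then have "Ddist V E {u} v u \<le> enat 1"
      using Ddist_le_path[of V E "[v,u]" v u "{u}"] False assms graph_vertices[OF assms(1)]
      by (auto simp: is_path_iff_successively)
    then have "half_pow (enat 1) \<le> half_pow (Ddist V E {u} v u)" by (rule half_pow_antimono)
    then show ?thesis by (simp add: exp_weight_def half_pow_enat)
  qed
  then show "exp_dominating V E {u}" using assms by (simp add: exp_dominating_def)
qed

lemma gamma_ef_star_le:
  assumes "lp_feasible V E x"
  shows "gamma_ef_star V E \<le> (\<Sum>u\<in>V. x u)"
  unfolding gamma_ef_star_def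
proof (rule cInf_lower)
  show "bdd_below {\<Sum>u\<in>V. x u | x. lp_feasible V E x}"
    by (rule bdd_belowI[of _ 0]) (auto simp: lp_feasible_def intro: sum_nonneg)
qed (use assms in blast)

lemma lp_feasible_one: "finite V \<Longrightarrow> lp_feasible V E (\<lambda>_. 1)"
  unfolding lp_feasible_def
proof (intro conjI ballI)
  fix v assume "finite V" "v \<in> V"
  then have "half_pow (gdist V E v v) \<le> (\<Sum>w\<in>V. half_pow (gdist V E w v))"
    by (intro member_le_sum) (auto simp: half_pow_nonneg)
  then show "1 \<le> (\<Sum>w\<in>V. half_pow (gdist V E w v) * 1)"
    using half_pow_gdist_self[OF \<open>v \<in> V\<close>] by simp
qed simp

lemma gamma_ef_star_greatest:
  assumes "finite V" "\<And>x. lp_feasible V E x \<Longrightarrow> c \<le> (\<Sum>u\<in>V. x u)"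
  shows "c \<le> gamma_ef_star V E"
  unfolding gamma_ef_star_def
  by (rule cInf_greatest) (use assms lp_feasible_one in auto)

lemma gamma_ef_star_ge_dual:
  assumes "finite V" "\<And>v. v \<in> V \<Longrightarrow> 0 \<le> y v"
    and "\<And>w. w \<in> V \<Longrightarrow> (\<Sum>v\<in>V. y v * half_pow (gdist V E w v)) \<le> 1"
  shows "(\<Sum>v\<in>V. y v) \<le> gamma_ef_star V E"
proof (rule gamma_ef_star_greatest[OF assms(1)])
  fix x assume x: "lp_feasible V E x"
  let ?h = "\<lambda>w v. half_pow (gdist V E w v)"
  have "y v * 1 \<le> y v * (\<Sum>w\<in>V. ?h w v * x w)" if "v \<in> V" for v
    using x assms(2) that by (intro mult_left_mono) (auto simp: lp_feasible_def)
  then have "(\<Sum>v\<in>V. y v) \<le> (\<Sum>v\<in>V. y v * (\<Sum>w\<in>V. ?h w v * x w))"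
    by (intro sum_mono) simp
  also have "\<dots> = (\<Sum>v\<in>V. \<Sum>w\<in>V. x w * (y v * ?h w v))"
    by (simp add: sum_distrib_left mult_ac)
  also have "\<dots> = (\<Sum>w\<in>V. \<Sum>v\<in>V. x w * (y v * ?h w v))"
    by (rule sum.swap)
  also have "\<dots> = (\<Sum>w\<in>V. x w * (\<Sum>v\<in>V. y v * ?h w v))"
    by (simp add: sum_distrib_left)
  also have "\<dots> \<le> (\<Sum>w\<in>V. x w * 1)"
    using x assms(3) by (intro sum_mono mult_left_mono) (auto simp: lp_feasible_def)
  finally show "(\<Sum>v\<in>V. y v) \<le> (\<Sum>w\<in>V. x w)" by simp
qed

lemma gamma_ef_star_le_uniform:
  assumes "0 < s" "\<And>v. v \<in> V \<Longrightarrow> s \<le> (\<Sum>w\<in>V. half_pow (gdist V E w v))"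
  shows "gamma_ef_star V E \<le> card V / s"
proof -
  have "lp_feasible V E (\<lambda>_. 1 / s)"
    using assms by (auto simp: lp_feasible_def sum_divide_distrib[symmetric] le_divide_eq)
  then show ?thesis using gamma_ef_star_le by fastforce
qed

lemma gamma_ef_star_le_gamma_e:
  assumes "graph V E"
  shows "gamma_ef_star V E \<le> gamma_e V E"
proof -
  have fin: "finite V" using assms by (simp add: graph_def)
  obtain D where D: "exp_dominating V E D" "card D = gamma_e V E"
    using gamma_e_attained[OF fin] .
  have "D \<subseteq> V" using D by (simp add: exp_dominating_def)
  then have VD: "V \<inter> D = D" by blast
  have "lp_feasible V E (\<lambda>u. of_bool (u \<in> D))"
    unfolding lp_feasible_def
  proof (intro conjI ballI)
    fix v assume "v \<in> V"
    then have "1 \<le> exp_weight V E D v" using D by (simp add: exp_dominating_def)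
    also have "\<dots> \<le> (\<Sum>w\<in>D. half_pow (gdist V E w v))"
      using assms by (rule exp_weight_le_sum_half_pow_gdist)
    also have "\<dots> = (\<Sum>w\<in>V. half_pow (gdist V E w v) * of_bool (w \<in> D))"
      using fin by (simp add: VD)
    finally show "1 \<le> (\<Sum>w\<in>V. half_pow (gdist V E w v) * of_bool (w \<in> D))" .
  qed simp
  then have "gamma_ef_star V E \<le> (\<Sum>u\<in>V. of_bool (u \<in> D))" by (rule gamma_ef_star_le)
  also have "\<dots> = card D"
    using fin by (simp add: VD)
  finally show ?thesis using D by simp
qed

lemma tree_walk_between_neighbours:
  assumes tree: "tree V E" and "E u y" "E u z" "y \<noteq> z"
    and w: "walk V E w" "hd w = z" "last w = y"
  shows "u \<in> set w"
proof (rule ccontr)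
  assume u: "u \<notin> set w"
  obtain q where q: "is_path V E q" "hd q = z" "last q = y" "set q \<subseteq> set w"
    using walk_contains_path[OF w(1)] w(2,3) by metis
  have g: "graph V E" using tree by (simp add: tree_def)
  have "q \<noteq> []" "u \<notin> set q" using q u by (auto simp: is_path_def)
  then have "is_path V E (u # q)"
    using q g \<open>E u z\<close> by (cases q) (auto simp: is_path_iff_successively graph_def)
  moreover have "length q \<ge> 2"
    using q \<open>y \<noteq> z\<close> \<open>q \<noteq> []\<close> by (cases q) (auto simp: Suc_le_eq)
  moreover have "E (last (u # q)) (hd (u # q))"
    using q \<open>q \<noteq> []\<close> graph_sym[OF g \<open>E u y\<close>] by simp
  ultimately have "is_cycle V E (u # q)" by (simp add: is_cycle_def)
  then show False using tree by (simp add: tree_def)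
qed

text \<open>A shortest \<open>u\<close>--\<open>v\<close> path leaves \<open>u\<close> through some neighbour \<open>y\<close>; if \<open>y \<noteq> z\<close>,
  going from \<open>z\<close> to \<open>v\<close> and back to \<open>y\<close> would avoid \<open>u\<close>, closing a cycle.\<close>
lemma tree_gdist_neighbour_less:
  assumes tree: "tree V E" and "E u z"
    and w: "walk V E w" "hd w = z" "last w = v" "u \<notin> set w"
  shows "gdist V E z v < gdist V E u v"
proof -
  have g: "graph V E" and conn: "connected_graph V E" using tree by (auto simp: tree_def)
  have "u \<in> V" "v \<in> V" "v \<noteq> u"
    using w graph_vertices[OF g \<open>E u z\<close>] by (auto simp: walk_def)
  then obtain k where k: "gdist V E u v = enat k"
    using gdist_finite[OF conn] by blast
  then obtain r where r: "is_path V E r" "hd r = u" "last r = v" "length r = Suc k"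
    by (rule gdist_attained)
  then obtain b where rb: "r = u # b" by (cases r) (auto simp: is_path_def)
  with r \<open>v \<noteq> u\<close> have "b \<noteq> []" by auto
  define y where "y = hd b"
  have "E u y" "walk V E b" "u \<notin> set b" "last b = v"
    using r rb \<open>b \<noteq> []\<close> by (cases b; auto simp: y_def is_path_iff_successively walk_def)+
  have "y = z"
  proof (rule ccontr)
    assume "y \<noteq> z"
    have "walk V E (w @ tl (rev b))"
      using walk_append_tl[OF w(1) walk_rev[OF g \<open>walk V E b\<close>]] w(3) \<open>last b = v\<close>
      by (simp add: hd_rev)
    moreover have "hd (w @ tl (rev b)) = z" "last (w @ tl (rev b)) = y"
      using w \<open>b \<noteq> []\<close> \<open>last b = v\<close> last_append_tl[of "rev b" w]
      by (auto simp: walk_def y_def hd_rev last_rev)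
    ultimately have "u \<in> set (w @ tl (rev b))"
      using tree_walk_between_neighbours[OF tree \<open>E u y\<close> \<open>E u z\<close> \<open>y \<noteq> z\<close>] by blast
    then show False
      using w(4) \<open>u \<notin> set b\<close> list.set_sel(2)[of "rev b" u] \<open>b \<noteq> []\<close> by auto
  qed
  then have "gdist V E z v \<le> enat (length b - 1)"
    using gdist_le_walk[OF \<open>walk V E b\<close>] \<open>last b = v\<close> by (simp add: y_def)
  also have "\<dots> < enat k" using r(4) rb \<open>b \<noteq> []\<close> by (cases b) auto
  finally show ?thesis using k by simp
qed

section \<open>Two vertices in a minimum exponential dominating set\<close>

lemma set_subset_ends_butlast_tl: "set p \<subseteq> {hd p, last p} \<union> set (butlast (tl p))"
proof (cases p)
  case (Cons a q)
  then show ?thesis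
    by (cases q rule: rev_cases) auto
qed simp

lemma Ddist_beyond_eq_infinity:
  assumes tree: "tree V E" and D: "u \<in> D" "u \<noteq> u'" and "E u z"
    and w: "walk V E w" "hd w = z" "last w = u'" "u \<notin> set w"
    and v: "v \<notin> D" "gdist V E u v \<le> gdist V E z v"
  shows "Ddist V E D v u' = \<infinity>"
proof (rule ccontr)
  have g: "graph V E" using tree by (simp add: tree_def)
  assume "Ddist V E D v u' \<noteq> \<infinity>"
  then obtain p where p: "is_path V E p" "hd p = v" "last p = u'"
      "set (butlast (tl p)) \<inter> D = {}"
    by (rule Ddist_finite_imp_path)
  then have "u \<notin> set p"
    using set_subset_ends_butlast_tl[of p] D v(1) by auto
  have "p \<noteq> []" using p by (simp add: is_path_def)
  have "walk V E (w @ tl (rev p))"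
    using walk_append_tl[OF w(1) walk_rev[OF g is_path_imp_walk[OF p(1)]]] w(3) p(3) \<open>p \<noteq> []\<close>
    by (simp add: hd_rev)
  moreover have "hd (w @ tl (rev p)) = z" "last (w @ tl (rev p)) = v"
    using w p \<open>p \<noteq> []\<close> last_append_tl[of "rev p" w] by (auto simp: walk_def hd_rev last_rev)
  moreover have "u \<notin> set (w @ tl (rev p))"
    using w(4) \<open>u \<notin> set p\<close> list.set_sel(2)[of "rev p" u] \<open>p \<noteq> []\<close> by auto
  ultimately have "gdist V E z v < gdist V E u v"
    by (intro tree_gdist_neighbour_less[OF tree \<open>E u z\<close>])
  then show False using v(2) by simp
qed

lemma sum_half_pow_gdist_slack:
  assumes tree: "tree V E" and dom: "exp_dominating V E D"
    and D: "u \<in> D" "u' \<in> D" "u \<noteq> u'" and "E u z"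
    and w: "walk V E w" "hd w = z" "last w = u'" "u \<notin> set w"
    and v: "v \<in> V" "gdist V E u v \<le> gdist V E z v"
  shows "1 + 2 / 2 ^ card V \<le> (\<Sum>x\<in>D. half_pow (gdist V E x v))"
proof -
  have g: "graph V E" and conn: "connected_graph V E" using tree by (auto simp: tree_def)
  have fin: "finite V" using g by (simp add: graph_def)
  have DV: "D \<subseteq> V" using dom by (simp add: exp_dominating_def)
  have finD: "finite D" using finite_subset[OF DV fin] .
  have h_nonneg: "\<And>x. 0 \<le> half_pow (gdist V E x v)" by (rule half_pow_nonneg)
  show ?thesis
  proof (cases "v \<in> D")
    case True
    have "card V \<noteq> 0" using fin v(1) by auto
    then have "(2::real) / 2 ^ card V \<le> 1"
      by (cases "card V") auto
    moreover have "half_pow (gdist V E v v) \<le> (\<Sum>x\<in>D. half_pow (gdist V E x v))"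
      using True finD h_nonneg by (intro member_le_sum) auto
    ultimately show ?thesis using half_pow_gdist_self[OF v(1), of E] by linarith
  next
    case False
    have "Ddist V E D v u' = \<infinity>"
      using Ddist_beyond_eq_infinity[OF tree D(1,3) \<open>E u z\<close> w False v(2)] .
    then have "exp_weight V E D v = (\<Sum>x\<in>D - {u'}. half_pow (Ddist V E D v x))"
      unfolding exp_weight_def using sum.remove[OF finD D(2), of "\<lambda>x. half_pow (Ddist V E D v x)"]
      by simp
    also have "\<dots> \<le> (\<Sum>x\<in>D - {u'}. half_pow (gdist V E x v))"
      using half_pow_Ddist_le[OF g] by (rule sum_mono)
    also have "\<dots> = (\<Sum>x\<in>D. half_pow (gdist V E x v)) - half_pow (gdist V E u' v)"
      using sum.remove[OF finD D(2), of "\<lambda>x. half_pow (gdist V E x v)"] by simp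
    finally have "exp_weight V E D v
        \<le> (\<Sum>x\<in>D. half_pow (gdist V E x v)) - half_pow (gdist V E u' v)" .
    moreover have "1 \<le> exp_weight V E D v" using dom v(1) by (simp add: exp_dominating_def)
    moreover have "gdist V E u' v \<le> enat (card V)"
      using gdist_le_card[OF fin gdist_finite[OF conn _ v(1)]] DV D(2) by blast
    then have "half_pow (enat (card V)) \<le> half_pow (gdist V E u' v)" by (rule half_pow_antimono)
    ultimately show ?thesis by (simp add: half_pow_enat)
  qed
qed

text \<open>Moving weight \<open>\<epsilon>\<close> off \<open>u\<close> and half of it onto the neighbour \<open>z\<close> towards \<open>u'\<close> costs
  nothing where \<open>z\<close> is closer than \<open>u\<close>, and elsewhere it is paid for by the slack.\<close>
lemma lp_feasible_shift:
  assumes tree: "tree V E" and dom: "exp_dominating V E D"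
    and D: "u \<in> D" "u' \<in> D" "u \<noteq> u'" and "E u z"
    and w: "walk V E w" "hd w = z" "last w = u'" "u \<notin> set w"
    and \<epsilon>: "0 \<le> \<epsilon>" "\<epsilon> \<le> 1 / 2 ^ card V"
  shows "lp_feasible V E (\<lambda>x. of_bool (x \<in> D) - \<epsilon> * of_bool (x = u) + \<epsilon> / 2 * of_bool (x = z))"
    (is "lp_feasible V E ?x")
  unfolding lp_feasible_def
proof (intro conjI ballI)
  have g: "graph V E" using tree by (simp add: tree_def)
  have fin: "finite V" using g by (simp add: graph_def)
  have DV: "D \<subseteq> V" using dom by (simp add: exp_dominating_def)
  have "u \<in> V" "z \<in> V" "z \<noteq> u"
    using graph_vertices[OF g \<open>E u z\<close>] graph_irrefl[OF g] \<open>E u z\<close> by auto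
  have "(1::real) / 2 ^ card V \<le> 1" by simp
  then have "\<epsilon> \<le> 1" using \<epsilon>(2) by linarith
  then show "0 \<le> ?x x" for x
    using \<epsilon>(1) D(1) by auto
  fix v assume "v \<in> V"
  let ?h = "\<lambda>x. half_pow (gdist V E x v)"
  have "(\<Sum>x\<in>V. ?h x * ?x x) = (\<Sum>x\<in>V. ?h x * of_bool (x \<in> D)) - \<epsilon> * (\<Sum>x\<in>V. ?h x * of_bool (x = u))
        + \<epsilon> / 2 * (\<Sum>x\<in>V. ?h x * of_bool (x = z))"
    by (simp add: algebra_simps sum.distrib sum_subtractf sum_distrib_left)
  also have "\<dots> = (\<Sum>x\<in>D. ?h x) - \<epsilon> * ?h u + \<epsilon> / 2 * ?h z"
    using fin DV \<open>u \<in> V\<close> \<open>z \<in> V\<close> by (simp add: Int_absorb1)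
  finally have sum_eq: "(\<Sum>x\<in>V. ?h x * ?x x) = (\<Sum>x\<in>D. ?h x) - \<epsilon> * ?h u + \<epsilon> / 2 * ?h z" .
  have "1 \<le> (\<Sum>x\<in>D. ?h x) - \<epsilon> * ?h u + \<epsilon> / 2 * ?h z"
  proof (cases "gdist V E u v = gdist V E z v + 1")
    case True
    then have "\<epsilon> * ?h u = \<epsilon> / 2 * ?h z" by (simp add: half_pow_plus_one)
    moreover have "1 \<le> exp_weight V E D v" using dom \<open>v \<in> V\<close> by (simp add: exp_dominating_def)
    ultimately show ?thesis using exp_weight_le_sum_half_pow_gdist[OF g, of D v] by linarith
  next
    case False
    moreover have "gdist V E u v \<le> gdist V E z v + 1" by (rule gdist_le_neighbour_plus_one[OF g \<open>E u z\<close>])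
    ultimately have "gdist V E u v \<le> gdist V E z v"
      by (cases "gdist V E u v"; cases "gdist V E z v") (auto simp: plus_1_eSuc eSuc_enat)
    then have "1 + 2 * \<epsilon> \<le> (\<Sum>x\<in>D. ?h x)"
      using sum_half_pow_gdist_slack[OF tree dom D \<open>E u z\<close> w \<open>v \<in> V\<close>] \<epsilon>(2) by simp
    moreover have "\<epsilon> * ?h u \<le> \<epsilon> * 2" using half_pow_le_two \<epsilon>(1) by (rule mult_left_mono)
    moreover have "0 \<le> \<epsilon> / 2 * ?h z" using \<epsilon>(1) half_pow_nonneg by simp
    ultimately show ?thesis by linarith
  qed
  then show "1 \<le> (\<Sum>x\<in>V. ?h x * ?x x)" using sum_eq by simp
qed

lemma gamma_ef_star_less_gamma_e:
  assumes tree: "tree V E" and D: "exp_dominating V E D" "card D = gamma_e V E"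
    and "u \<in> D" "u' \<in> D" "u \<noteq> u'"
  shows "gamma_ef_star V E < gamma_e V E"
proof -
  have g: "graph V E" and conn: "connected_graph V E" using tree by (auto simp: tree_def)
  have fin: "finite V" using g by (simp add: graph_def)
  have DV: "D \<subseteq> V" using D by (simp add: exp_dominating_def)
  obtain q where q: "is_path V E q" "hd q = u" "last q = u'"
    using conn DV \<open>u \<in> D\<close> \<open>u' \<in> D\<close> unfolding connected_graph_def by blast
  then obtain w where qw: "q = u # w" by (cases q) (auto simp: is_path_def)
  with q \<open>u \<noteq> u'\<close> have "w \<noteq> []" by auto
  define z where "z = hd w"
  have "E u z" "walk V E w" "u \<notin> set w" "last w = u'"
    using q qw \<open>w \<noteq> []\<close> by (cases w; auto simp: z_def is_path_iff_successively walk_def)+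
  have "u \<in> V" "z \<in> V" "z \<noteq> u"
    using graph_vertices[OF g \<open>E u z\<close>] graph_irrefl[OF g] \<open>E u z\<close> by auto
  define \<epsilon> :: real where "\<epsilon> = 1 / 2 ^ card V"
  have "\<epsilon> > 0" by (simp add: \<epsilon>_def)
  have "lp_feasible V E (\<lambda>x. of_bool (x \<in> D) - \<epsilon> * of_bool (x = u) + \<epsilon> / 2 * of_bool (x = z))"
    using \<open>\<epsilon> > 0\<close>
    by (intro lp_feasible_shift[OF tree D(1) \<open>u \<in> D\<close> \<open>u' \<in> D\<close> \<open>u \<noteq> u'\<close> \<open>E u z\<close> \<open>walk V E w\<close>
          _ \<open>last w = u'\<close> \<open>u \<notin> set w\<close>]) (simp_all add: z_def \<epsilon>_def)
  then have "gamma_ef_star V E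
      \<le> (\<Sum>x\<in>V. of_bool (x \<in> D) - \<epsilon> * of_bool (x = u) + \<epsilon> / 2 * of_bool (x = z))"
    by (rule gamma_ef_star_le)
  also have "\<dots> = (\<Sum>x\<in>V. of_bool (x \<in> D)) - \<epsilon> * (\<Sum>x\<in>V. of_bool (x = u))
      + \<epsilon> / 2 * (\<Sum>x\<in>V. of_bool (x = z))"
    by (simp only: sum.distrib sum_subtractf sum_distrib_left)
  also have "\<dots> = card D - \<epsilon> / 2"
    using fin DV \<open>u \<in> V\<close> \<open>z \<in> V\<close> by (simp add: Int_absorb1)
  finally show ?thesis using \<open>\<epsilon> > 0\<close> D(2) by simp
qed

section \<open>Stars and the claw\<close>

lemma star_gdist_le_two:
  assumes g: "graph V E" and star: "\<forall>v\<in>V. v = u \<or> E v u" and "w \<in> V" "v \<in> V"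
  shows "gdist V E w v \<le> 2"
proof -
  have "gdist V E u v \<le> 1"
    using star \<open>v \<in> V\<close> gdist_edge[OF g] graph_sym[OF g] gdist_self[of u V E]
    by (metis order.trans zero_le)
  show ?thesis
  proof (cases "w = u")
    case True
    then show ?thesis using \<open>gdist V E u v \<le> 1\<close> one_le_numeral order.trans by blast
  next
    case False
    then have "gdist V E w v \<le> gdist V E u v + 1"
      using star \<open>w \<in> V\<close> by (intro gdist_le_neighbour_plus_one[OF g]) auto
    also have "\<dots> \<le> 1 + 1" using \<open>gdist V E u v \<le> 1\<close> by (intro add_right_mono)
    finally show ?thesis by (simp add: one_add_one)
  qed
qed

lemma star_sum_half_pow_gdist:
  assumes g: "graph V E" and star: "\<forall>v\<in>V. v = u \<or> E v u"
    and "v \<in> V" "m \<in> V" "m \<noteq> v" "E m v"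
  shows "(card V + 4) / 2 \<le> (\<Sum>w\<in>V. half_pow (gdist V E w v))"
proof -
  have fin: "finite V" using g by (simp add: graph_def)
  have "1 / 2 + 3 / 2 * of_bool (w = v) + 1 / 2 * of_bool (w = m) \<le> half_pow (gdist V E w v)"
    if "w \<in> V" for w
  proof -
    have "half_pow 2 \<le> half_pow (gdist V E w v)"
      using star_gdist_le_two[OF g star that \<open>v \<in> V\<close>] by (rule half_pow_antimono)
    then show ?thesis
      using half_pow_gdist_self[OF \<open>v \<in> V\<close>] half_pow_gdist_edge[OF g \<open>E m v\<close>] \<open>m \<noteq> v\<close>
      by auto
  qed
  then have "(\<Sum>w\<in>V. 1 / 2 + 3 / 2 * of_bool (w = v) + 1 / 2 * of_bool (w = m))
      \<le> (\<Sum>w\<in>V. half_pow (gdist V E w v))"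
    by (rule sum_mono)
  also have "(\<Sum>w\<in>V. 1 / 2 + 3 / 2 * of_bool (w = v) + 1 / 2 * of_bool (w = m))
      = card V / 2 + 3 / 2 * (\<Sum>w\<in>V. of_bool (w = v)) + 1 / 2 * (\<Sum>w\<in>V. of_bool (w = m))"
    by (simp only: sum.distrib sum_distrib_left sum_constant)
  also have "\<dots> = (card V + 4) / 2" using fin \<open>v \<in> V\<close> \<open>m \<in> V\<close> by simp
  finally show ?thesis .
qed

lemma star_gamma_ef_star_less_one:
  assumes g: "graph V E" and "u \<in> V" and star: "\<forall>v\<in>V. v = u \<or> E v u" and "card V \<le> 3"
  shows "gamma_ef_star V E < 1"
proof (cases "V = {u}")
  case True
  have "2 \<le> (\<Sum>w\<in>V. half_pow (gdist V E w v))" if "v \<in> V" for v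
    using True that half_pow_gdist_self[of u V E] by simp
  then have "gamma_ef_star V E \<le> card V / 2" by (intro gamma_ef_star_le_uniform) auto
  then show ?thesis using True by simp
next
  case False
  then obtain a where a: "a \<in> V" "a \<noteq> u" "E a u" using \<open>u \<in> V\<close> star by blast
  have "(card V + 4) / 2 \<le> (\<Sum>w\<in>V. half_pow (gdist V E w v))" if "v \<in> V" for v
  proof (cases "v = u")
    case True
    then show ?thesis using star_sum_half_pow_gdist[OF g star that a(1)] a by simp
  next
    case False
    then show ?thesis
      using star_sum_half_pow_gdist[OF g star that \<open>u \<in> V\<close>] star that graph_sym[OF g] by blast
  qed
  then have "gamma_ef_star V E \<le> card V / ((card V + 4) / 2)"
    by (intro gamma_ef_star_le_uniform) auto
  also have "\<dots> < 1" using \<open>card V \<le> 3\<close> by (simp add: field_simps)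
  finally show ?thesis .
qed

definition claw :: "'a set \<Rightarrow> ('a \<Rightarrow> 'a \<Rightarrow> bool) \<Rightarrow> 'a \<Rightarrow> 'a \<Rightarrow> 'a \<Rightarrow> 'a \<Rightarrow> bool" where
  "claw V E c a1 a2 a3 \<longleftrightarrow> distinct [c, a1, a2, a3] \<and> V = {c, a1, a2, a3}
     \<and> E c a1 \<and> E c a2 \<and> E c a3 \<and> \<not> E a1 a2 \<and> \<not> E a1 a3 \<and> \<not> E a2 a3"

lemma graph_iso_K13_iff_claw:
  assumes g: "graph V E"
  shows "graph_iso V E K13_V K13_E \<longleftrightarrow> (\<exists>c a1 a2 a3. claw V E c a1 a2 a3)"
proof
  assume "graph_iso V E K13_V K13_E"
  then obtain f where f: "bij_betw f V K13_V" "\<forall>u\<in>V. \<forall>v\<in>V. E u v \<longleftrightarrow> K13_E (f u) (f v)"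
    unfolding graph_iso_def by blast
  define h where "h = inv_into V f"
  have h: "bij_betw h K13_V V" unfolding h_def using f(1) by (rule bij_betw_inv_into)
  have fh: "f (h i) = i" if "i \<in> K13_V" for i
    unfolding h_def using f(1) that by (simp add: bij_betw_def f_inv_into_f)
  have hV: "h i \<in> V" if "i \<in> K13_V" for i using h that by (auto simp: bij_betw_def)
  have E_h: "E (h i) (h j) \<longleftrightarrow> K13_E i j" if "i \<in> K13_V" "j \<in> K13_V" for i j
    using f(2) hV fh that by metis
  have "distinct [h 0, h 1, h 2, h 3]"
    using h by (auto simp: bij_betw_def inj_on_def K13_V_def)
  moreover have "V = {h 0, h 1, h 2, h 3}"
    using h by (auto simp: bij_betw_def K13_V_def)
  ultimately have "claw V E (h 0) (h 1) (h 2) (h 3)"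
    unfolding claw_def using E_h by (simp add: K13_V_def K13_E_def)
  then show "\<exists>c a1 a2 a3. claw V E c a1 a2 a3" by blast
next
  assume "\<exists>c a1 a2 a3. claw V E c a1 a2 a3"
  then obtain c a1 a2 a3 where claw: "claw V E c a1 a2 a3" by blast
  define f where "f x = (if x = c then 0 else if x = a1 then 1 else if x = a2 then 2 else (3::nat))"
    for x
  have "bij_betw f V K13_V"
    using claw by (auto simp: bij_betw_def inj_on_def claw_def f_def K13_V_def)
  moreover have "\<forall>x\<in>V. \<forall>y\<in>V. E x y \<longleftrightarrow> K13_E (f x) (f y)"
    using claw graph_sym[OF g] graph_irrefl[OF g]
    by (auto simp: claw_def f_def K13_E_def)
  ultimately show "graph_iso V E K13_V K13_E" unfolding graph_iso_def by blast
qed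

text \<open>The dual solution putting \<open>1/3\<close> on each leaf certifies the lower bound \<open>1\<close>.\<close>
lemma claw_gamma_e_eq_gamma_ef_star:
  assumes g: "graph V E" and claw: "claw V E c a1 a2 a3"
  shows "real (gamma_e V E) = gamma_ef_star V E"
proof -
  have V: "V = {c, a1, a2, a3}" and d: "distinct [c, a1, a2, a3]"
    and e: "E c a1" "E c a2" "E c a3" and ne: "\<not> E a1 a2" "\<not> E a1 a3" "\<not> E a2 a3"
    using claw by (auto simp: claw_def)
  have ne': "\<not> E a2 a1" "\<not> E a3 a1" "\<not> E a3 a2" using ne graph_sym[OF g] by blast+
  have leaves: "a1 \<noteq> c" "a2 \<noteq> c" "a3 \<noteq> c" using d by auto
  have "exp_dominating V E {c}"
    using e graph_sym[OF g] V by (subst exp_dominating_singleton_iff[OF g]) auto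
  then have "gamma_e V E \<le> 1" unfolding gamma_e_def by (intro Least_le) force
  have sum_V: "(\<Sum>v\<in>V. f v) = f c + f a1 + f a2 + f a3" for f :: "_ \<Rightarrow> real"
    using d by (simp add: V add.assoc)
  let ?h = "\<lambda>w v. half_pow (gdist V E w v)"
  let ?y = "\<lambda>v. of_bool (v \<noteq> c) / (3::real)"
  have "(\<Sum>v\<in>V. ?y v * ?h w v) \<le> 1" if "w \<in> V" for w
  proof -
    have "(\<Sum>v\<in>V. ?y v * ?h w v) = (?h w a1 + ?h w a2 + ?h w a3) / 3"
      using leaves by (simp add: sum_V add_divide_distrib)
    also have "\<dots> \<le> 1"
    proof -
      have bound: "?h w v \<le> (if w = v then 2 else if E w v then 1 else 1 / 2)" for v
        using half_pow_le_two[of "gdist V E w v"] half_pow_gdist_le_one[of w v V E]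
          half_pow_gdist_le_half[of w v E V] by auto
      have "(if w = a1 then 2 else if E w a1 then 1 else 1 / 2)
          + (if w = a2 then 2 else if E w a2 then 1 else 1 / 2)
          + (if w = a3 then 2 else if E w a3 then 1 else 1 / 2) \<le> (3::real)"
        using that V leaves d e ne ne' by auto
      then have "?h w a1 + ?h w a2 + ?h w a3 \<le> 3"
        using add_mono[OF add_mono[OF bound[of a1] bound[of a2]] bound[of a3]] by linarith
      then show ?thesis by simp
    qed
    finally show ?thesis .
  qed
  then have "(\<Sum>v\<in>V. ?y v) \<le> gamma_ef_star V E"
    using V by (intro gamma_ef_star_ge_dual) auto
  moreover have "(\<Sum>v\<in>V. ?y v) = 1" using leaves by (simp add: sum_V)
  moreover have "gamma_ef_star V E \<le> gamma_e V E" using g by (rule gamma_ef_star_le_gamma_e)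
  ultimately show ?thesis using \<open>gamma_e V E \<le> 1\<close> by linarith
qed

lemma tree_star_claw_or_small:
  assumes tree: "tree V E" and "subcubic V E" and "u \<in> V" and star: "\<forall>v\<in>V. v = u \<or> E v u"
  shows "(\<exists>c a1 a2 a3. claw V E c a1 a2 a3) \<or> card V \<le> 3"
proof -
  have g: "graph V E" using tree by (simp add: tree_def)
  let ?N = "{v\<in>V. E u v}"
  have "card ?N \<le> 3" using assms by (simp add: subcubic_def)
  have "\<forall>v\<in>V. v = u \<or> E u v" using star graph_sym[OF g] by blast
  then have "V = insert u ?N" "u \<notin> ?N"
    using graph_irrefl[OF g] \<open>u \<in> V\<close> by auto
  have no_edge: "\<not> E a b" if "a \<in> ?N" "b \<in> ?N" for a b
  proof
    assume "E a b"
    moreover have "E b u" using that by (auto intro: graph_sym[OF g])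
    moreover have "a \<noteq> b" using graph_irrefl[OF g] \<open>E a b\<close> by auto
    ultimately have "is_cycle V E [u, a, b]"
      using that graph_irrefl[OF g] \<open>u \<in> V\<close> by (auto simp: is_cycle_def is_path_iff_successively)
    then show False using tree by (simp add: tree_def)
  qed
  show ?thesis
  proof (cases "card ?N = 3")
    case True
    then obtain a1 a2 a3 where N: "?N = {a1, a2, a3}" "a1 \<noteq> a2" "a2 \<noteq> a3" "a1 \<noteq> a3"
      using card_3_iff[THEN iffD1] by blast
    then have a: "a1 \<in> ?N" "a2 \<in> ?N" "a3 \<in> ?N" by auto
    have "distinct [u, a1, a2, a3]" using N a \<open>u \<notin> ?N\<close> by auto
    moreover have "V = {u, a1, a2, a3}" using N(1) \<open>V = insert u ?N\<close> by simp
    moreover have "E u a1" "E u a2" "E u a3" using a by auto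
    ultimately have "claw V E u a1 a2 a3"
      using no_edge[OF a(1,2)] no_edge[OF a(1,3)] no_edge[OF a(2,3)] by (simp add: claw_def)
    then show ?thesis by blast
  next
    case False
    have "finite ?N" using g by (simp add: graph_def)
    then have "card V = Suc (card ?N)"
      using \<open>V = insert u ?N\<close> \<open>u \<notin> ?N\<close> card_insert_disjoint by metis
    then show ?thesis using False \<open>card ?N \<le> 3\<close> by simp
  qed
qed

lemma minimum_exp_dominating_singleton:
  assumes tree: "tree V E" and D: "exp_dominating V E D" "card D = gamma_e V E"
    and eq: "real (gamma_e V E) = gamma_ef_star V E"
  obtains u where "D = {u}" "u \<in> V"
proof -
  have single: "u = u'" if "u \<in> D" "u' \<in> D" for u u'
  proof (rule ccontr)
    assume "u \<noteq> u'"
    with gamma_ef_star_less_gamma_e[OF tree D that] eq show False by simp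
  qed
  obtain v where "v \<in> V" using tree by (auto simp: tree_def connected_graph_def)
  then have "D \<noteq> {}" using D(1) by (auto simp: exp_dominating_def exp_weight_def)
  moreover have "D \<subseteq> V" using D(1) by (simp add: exp_dominating_def)
  ultimately show ?thesis using single that by blast
qed

theorem theorem4:
  fixes V :: "'a set" and E :: "'a \<Rightarrow> 'a \<Rightarrow> bool"
  assumes "tree V E" and "subcubic V E"
  shows "real (gamma_e V E) = gamma_ef_star V E \<longleftrightarrow> graph_iso V E K13_V K13_E"
proof -
  have g: "graph V E" using assms(1) by (simp add: tree_def)
  show ?thesis
  proof
    obtain D where D: "exp_dominating V E D" "card D = gamma_e V E"
      using gamma_e_attained g by (auto simp: graph_def)
    assume eq: "real (gamma_e V E) = gamma_ef_star V E"
    then obtain u where "D = {u}" "u \<in> V"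
      using minimum_exp_dominating_singleton[OF assms(1) D] by blast
    then have star: "\<forall>v\<in>V. v = u \<or> E v u"
      using D(1) exp_dominating_singleton_iff[OF g] by blast
    have "gamma_ef_star V E = 1" using eq D(2) \<open>D = {u}\<close> by simp
    then have "\<not> card V \<le> 3" using star_gamma_ef_star_less_one[OF g \<open>u \<in> V\<close> star] by auto
    then show "graph_iso V E K13_V K13_E"
      using tree_star_claw_or_small[OF assms \<open>u \<in> V\<close> star] graph_iso_K13_iff_claw[OF g] by blast
  next
    assume "graph_iso V E K13_V K13_E"
    then obtain c a1 a2 a3 where "claw V E c a1 a2 a3" using graph_iso_K13_iff_claw[OF g] by blast
    then show "real (gamma_e V E) = gamma_ef_star V E" by (rule claw_gamma_e_eq_gamma_ef_star[OF g])
  qed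
qed

end
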